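(* Let $k\ge3$. Let $C$ be a cycle of length $2k$ and $P$ a path of length $\ell\in\{2k-1,2k,2k+1\}$ such that $E(C)\cap E(P)=\emptyset$, $V(C)\cap V(P)\neq\emptyset$, and no end vertex of $P$ lies in $V(C)$. If $H:=C\cup P$ has girth at least $2k-2$, then $H$ can be decomposed into two paths whose lengths lie in $\{2k,\ell\}$ such that each of the two paths has exactly one end vertex of $P$ as one of its end vertices.
   Context: Graphs are finite and simple; length = number of edges; girth = length of a shortest cycle. A decomposition of a graph is a set of subgraphs whose edge sets partition its edge set. *)

theory Defs
  imports Main
begin

text \<open>Graphs are represented by their edge sets (edges are 2-element vertex sets).\<close>

definition path_edges :: "'a list \<Rightarrow> 'a set set" where
  "path_edges vs = set (map (\<lambda>(x, y). {x, y}) (zip vs (tl vs)))"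

definition is_path :: "'a list \<Rightarrow> bool" where
  "is_path vs \<longleftrightarrow> vs \<noteq> [] \<and> distinct vs"

definition path_len :: "'a list \<Rightarrow> nat" where
  "path_len vs = length vs - 1"

definition cycle_edges :: "'a list \<Rightarrow> 'a set set" where
  "cycle_edges vs = path_edges (vs @ [hd vs])"

definition is_cycle :: "'a list \<Rightarrow> bool" where
  "is_cycle vs \<longleftrightarrow> length vs \<ge> 3 \<and> distinct vs"

definition girth_at_least :: "'a set set \<Rightarrow> nat \<Rightarrow> bool" where
  "girth_at_least E g \<longleftrightarrow> (\<forall>cy. is_cycle cy \<and> cycle_edges cy \<subseteq> E \<longrightarrow> length cy \<ge> g)"

end

theory Submission
  imports Defs
begin

text \<open>Let \<open>p ! z\<close> be the last vertex of the path on the cycle and label the cycle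
  \<open>c ! 0, \<dots>, c ! (2k - 1)\<close> starting at \<open>c ! 0 = p ! z\<close>. If for some \<open>s\<close> with
  \<open>z + s \<in> {2k, l}\<close> the arc \<open>c ! 1, \<dots>, c ! s\<close> avoids the path, then
  \<open>p ! 0 \<dots> p ! z, c ! 1 \<dots> c ! s\<close> and \<open>p ! l \<dots> p ! z, c ! (2k - 1) \<dots> c ! s\<close> are the two
  required paths. Otherwise the cycle returns to the path early in both directions from
  \<open>c ! 0\<close>, at vertices \<open>p ! pos1\<close> and \<open>p ! pos2\<close> with \<open>pos1, pos2 < z\<close>. Every cycle made of a
  segment of the path and an arc of the cycle has length at least \<open>2k - 2\<close>; applied to the
  arcs through and around \<open>c ! 0\<close>, to the two arcs between nearby vertices of the path, and
  to the reversed path, these bounds are contradictory unless \<open>k = 3\<close> and \<open>l = 7\<close>, where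
  the configuration is rigid and the decomposition is written down explicitly.\<close>

section \<open>Paths and cycles as vertex lists\<close>

lemma path_edges_Nil [simp]: "path_edges [] = {}"
  by (simp add: path_edges_def)

lemma path_edges_singleton [simp]: "path_edges [a] = {}"
  by (simp add: path_edges_def)

lemma path_edges_Cons_Cons [simp]: "path_edges (a # b # xs) = insert {a, b} (path_edges (b # xs))"
  by (simp add: path_edges_def)

lemma path_edges_Cons: "xs \<noteq> [] \<Longrightarrow> path_edges (a # xs) = insert {a, hd xs} (path_edges xs)"
  by (cases xs) auto

lemma path_edges_append:
  "path_edges (xs @ ys) = path_edges xs \<union> path_edges ys \<union>
     (if xs \<noteq> [] \<and> ys \<noteq> [] then {{last xs, hd ys}} else {})"
  by (induction xs rule: induct_list012) (auto simp: path_edges_Cons)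

lemma path_edges_snoc: "xs \<noteq> [] \<Longrightarrow> path_edges (xs @ [a]) = insert {last xs, a} (path_edges xs)"
  by (auto simp: path_edges_append)

lemma path_edges_rev [simp]: "path_edges (rev xs) = path_edges xs"
proof (induction xs)
  case (Cons a xs)
  then show ?case
    by (cases "xs = []") (auto simp: path_edges_snoc path_edges_Cons last_rev insert_commute)
qed simp

lemma path_edges_subset_set: "e \<in> path_edges xs \<Longrightarrow> e \<subseteq> set xs"
  by (induction xs rule: induct_list012) auto

lemma finite_path_edges [simp]: "finite (path_edges xs)"
  by (simp add: path_edges_def)

lemma card_path_edges: "distinct xs \<Longrightarrow> card (path_edges xs) = length xs - 1"
proof (induction xs rule: induct_list012)
  case (3 a b xs)
  then have "{a, b} \<notin> path_edges (b # xs)"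
    using path_edges_subset_set by fastforce
  with 3 show ?case
    by simp
qed auto

lemma path_edges_take_Suc_drop:
  assumes "j < length xs"
  shows "path_edges (take (Suc j) xs) \<union> path_edges (drop j xs) = path_edges xs"
proof -
  have "path_edges xs = path_edges (take (Suc j) xs @ drop (Suc j) xs)"
    by simp
  moreover have "drop j xs = xs ! j # drop (Suc j) xs"
    using assms by (simp add: Cons_nth_drop_Suc)
  moreover have "last (take (Suc j) xs) = xs ! j"
    using assms by (simp add: take_Suc_conv_app_nth)
  ultimately show ?thesis
    by (cases "drop (Suc j) xs") (auto simp: path_edges_append)
qed

lemma path_edges_take_drop_subset: "path_edges (take j xs) \<union> path_edges (drop j xs) \<subseteq> path_edges xs"
  using path_edges_append[of "take j xs" "drop j xs"] by (metis Un_upper1 append_take_drop_id)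

lemma path_edges_segment_subset: "path_edges (drop i (take j xs)) \<subseteq> path_edges xs"
  using path_edges_take_drop_subset[of i "take j xs"] path_edges_take_drop_subset[of j xs] by blast

lemma in_set_segment:
  assumes "x \<in> set (drop j (take (Suc j') xs))" "j' < length xs"
  obtains m where "j \<le> m" "m \<le> j'" "x = xs ! m"
proof -
  obtain i where "i < length (drop j (take (Suc j') xs))" "x = drop j (take (Suc j') xs) ! i"
    using assms(1) by (auto simp: in_set_conv_nth)
  then show ?thesis
    using that[of "j + i"] assms(2) by auto
qed

lemma in_set_take_tl:
  assumes "x \<in> set (take s (tl c))"
  obtains i where "1 \<le> i" "i \<le> s" "x = c ! i"
proof -
  obtain j where "j < s" "j < length (tl c)" "x = tl c ! j"
    using assms by (auto simp: in_set_conv_nth)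
  then show ?thesis
    using that[of "Suc j"] by (cases c) auto
qed

lemma take_Suc_arc:
  assumes "1 \<le> e" "e < length c"
  shows "take (Suc e) c = c ! 0 # take (e - 1) (tl c) @ [c ! e]"
proof (cases c)
  case (Cons a t)
  have "take (Suc e) c = take e c @ [c ! e]"
    using assms(2) by (rule take_Suc_conv_app_nth)
  moreover have "take e c = a # take (e - 1) t"
    using Cons assms by (cases e) auto
  ultimately show ?thesis
    using Cons by simp
qed (use assms in simp)

lemma cycle_edges_conv: "c \<noteq> [] \<Longrightarrow> cycle_edges c = insert {last c, hd c} (path_edges c)"
  by (simp add: cycle_edges_def path_edges_snoc)

lemma path_edges_subset_cycle_edges: "path_edges c \<subseteq> cycle_edges c"
  by (cases "c = []") (auto simp: cycle_edges_conv)

lemma card_cycle_edges: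
  assumes "is_cycle c"
  shows "card (cycle_edges c) = length c"
proof -
  obtain a t where c: "c = a # t" and t: "2 \<le> length t" and dis: "distinct (a # t)"
    using assms unfolding is_cycle_def by (cases c) auto
  have "{a, hd t} \<notin> path_edges (t @ [a])"
  proof
    assume "{a, hd t} \<in> path_edges (t @ [a])"
    moreover have "{a, hd t} \<notin> path_edges t"
      using path_edges_subset_set dis by fastforce
    moreover have "t \<noteq> []" "a \<noteq> hd t" "hd t \<noteq> last t"
      using t dis by (cases t; auto)+
    ultimately have "{a, hd t} = {last t, a}"
      by (simp add: path_edges_snoc)
    then show False
      using \<open>a \<noteq> hd t\<close> \<open>hd t \<noteq> last t\<close> by (auto simp: doubleton_eq_iff)
  qed
  moreover have "t \<noteq> []" and "distinct (t @ [a])"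
    using t dis by auto
  ultimately show ?thesis
    using c by (simp add: cycle_edges_def path_edges_Cons card_path_edges)
qed

lemma cycle_edges_0_1:
  assumes "is_cycle c"
  shows "{c ! 0, c ! 1} \<in> cycle_edges c"
proof -
  obtain a b t where "c = a # b # t"
    using assms unfolding is_cycle_def by (metis Suc_le_length_iff numeral_3_eq_3)
  then show ?thesis
    by (simp add: cycle_edges_def)
qed

lemma cycle_edges_0_last: "is_cycle c \<Longrightarrow> {c ! 0, c ! (length c - 1)} \<in> cycle_edges c"
  by (cases c) (auto simp: is_cycle_def cycle_edges_conv last_conv_nth insert_commute)

lemma cycle_edges_rotate1: "cycle_edges (rotate1 c) = cycle_edges c"
proof (cases c)
  case (Cons a t)
  then show ?thesis
    by (cases "t = []") (auto simp: cycle_edges_conv path_edges_snoc path_edges_Cons)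
qed simp

lemma cycle_edges_rotate: "cycle_edges (rotate m c) = cycle_edges c"
  by (induction m) (simp_all add: cycle_edges_rotate1)

definition reflect :: "'a list \<Rightarrow> 'a list" where
  "reflect c = hd c # rev (tl c)"

lemma cycle_edges_reflect: "c \<noteq> [] \<Longrightarrow> cycle_edges (reflect c) = cycle_edges c"
proof (cases c)
  case (Cons a t)
  have "a # rev t @ [a] = rev (a # t @ [a])"
    by simp
  then have "cycle_edges (reflect c) = path_edges (rev (a # t @ [a]))"
    using Cons by (simp add: reflect_def cycle_edges_def)
  then show ?thesis
    using Cons by (simp only: path_edges_rev) (simp add: cycle_edges_def)
qed simp

lemma length_reflect [simp]: "c \<noteq> [] \<Longrightarrow> length (reflect c) = length c"
  by (cases c) (auto simp: reflect_def)

lemma set_reflect [simp]: "c \<noteq> [] \<Longrightarrow> set (reflect c) = set c"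
  by (cases c) (auto simp: reflect_def)

lemma is_cycle_reflect: "c \<noteq> [] \<Longrightarrow> is_cycle (reflect c) = is_cycle c"
  by (cases c) (auto simp: reflect_def is_cycle_def)

lemma nth_reflect:
  assumes "i < length c"
  shows "reflect c ! i = c ! ((length c - i) mod length c)"
proof (cases c)
  case (Cons a t)
  show ?thesis
  proof (cases i)
    case (Suc j)
    then have "reflect c ! i = t ! (length t - Suc j)"
      using Cons assms by (simp add: reflect_def rev_nth)
    also have "\<dots> = c ! ((length c - i) mod length c)"
      using Cons Suc assms by (simp add: Suc_diff_Suc)
    finally show ?thesis .
  qed (simp add: Cons reflect_def)
qed (use assms in simp)

lemma add_mod_cancel_left:
  fixes a i d m :: nat
  assumes "a < m" "i < m" "d < m" "(a + i) mod m = (a + d) mod m"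
  shows "i = d"
  using assms by (auto simp: mod_if split: if_splits)

lemma path_edges_cut_cycle:
  assumes z: "z < length p" "c ! 0 = p ! z" and s: "1 \<le> s" "s < length c"
  shows "path_edges (take (Suc z) p @ take s (tl c)) \<union> path_edges (rev (drop s c @ drop z p))
    = cycle_edges c \<union> path_edges p"
proof -
  have c_ne: "c \<noteq> []" "take s (tl c) \<noteq> []"
    using s by (cases c; auto)+
  have take_c: "take (Suc s) c = c ! 0 # take s (tl c)" "hd (take s (tl c)) = c ! 1"
    using c_ne by (cases c; auto simp: hd_conv_nth)+
  have "path_edges (take (Suc z) p @ take s (tl c))
      = path_edges (take (Suc z) p) \<union> path_edges (take (Suc s) c)"
    unfolding take_c using z c_ne
    by (auto simp: path_edges_append path_edges_Cons take_Suc_conv_app_nth)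
  moreover have "path_edges (rev (drop s c @ drop z p))
      = path_edges (drop z p) \<union> path_edges (drop s c @ [c ! 0])"
    unfolding path_edges_rev using z s
    by (auto simp: path_edges_append path_edges_snoc hd_drop_conv_nth)
  moreover have "cycle_edges c = path_edges (take (Suc s) c) \<union> path_edges (drop s c @ [c ! 0])"
    using path_edges_take_Suc_drop[of s "c @ [c ! 0]"] s c_ne
    by (simp add: cycle_edges_def hd_conv_nth)
  ultimately show ?thesis
    using path_edges_take_Suc_drop[OF z(1)] by blast
qed

section \<open>Girth\<close>

lemma cycle_edges_path_arc:
  assumes q: "q \<noteq> []" "hd q = c ! e" "last q = c ! 0" and e: "1 \<le> e" "e < length c"
  shows "cycle_edges (q @ take (e - 1) (tl c)) = path_edges q \<union> path_edges (take (Suc e) c)"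
  using q unfolding cycle_edges_def take_Suc_arc[OF e]
  by (simp add: path_edges_append path_edges_Cons insert_commute)

lemma girth_le_path_plus_arc:
  assumes girth: "girth_at_least H g"
    and c: "is_cycle c" "cycle_edges c \<subseteq> H"
    and q: "distinct q" "q \<noteq> []" "path_edges q \<subseteq> H" "path_edges q \<inter> cycle_edges c = {}"
    and ends: "hd q = c ! e" "last q = c ! 0"
    and e: "1 \<le> e" "e < length c"
    and avoid: "\<And>i. 1 \<le> i \<Longrightarrow> i < e \<Longrightarrow> c ! i \<notin> set q"
  shows "g \<le> length q - 1 + e"
proof -
  define A where "A = take (e - 1) (tl c)"
  have dc: "distinct c"
    using c by (simp add: is_cycle_def)
  then have "distinct (c ! 0 # A @ [c ! e])"
    by (metis A_def take_Suc_arc[OF e] distinct_take)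
  moreover have "set q \<inter> set A = {}"
    using avoid by (fastforce simp: A_def elim: in_set_take_tl)
  ultimately have dcyc: "distinct (q @ A)"
    using q by simp
  have "c ! e \<noteq> c ! 0"
    using dc e by (subst nth_eq_iff_index_eq) auto
  then have lq: "2 \<le> length q"
    using q ends by (cases q rule: remdups_adj.cases) auto
  have "cycle_edges (q @ A) \<subseteq> H"
    unfolding A_def cycle_edges_path_arc[OF q(2) ends e]
    using q c path_edges_take_drop_subset[of "Suc e" c] path_edges_subset_cycle_edges[of c] by blast
  moreover have "3 \<le> length (q @ A)"
  proof (rule ccontr)
    assume "\<not> 3 \<le> length (q @ A)"
    then have "length q = 2" and "e = 1"
      using lq e c by (auto simp: A_def)
    then have "q = [c ! 1, c ! 0]"
      using ends by (auto simp: length_Suc_conv numeral_2_eq_2)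
    then show False
      using q(4) cycle_edges_0_1[OF c(1)] by (auto simp: insert_commute)
  qed
  ultimately have "g \<le> length (q @ A)"
    using girth dcyc unfolding girth_at_least_def is_cycle_def by blast
  then show ?thesis
    using e c by (simp add: A_def)
qed

definition two_path_decomposition :: "'a set set \<Rightarrow> nat set \<Rightarrow> 'a set \<Rightarrow> bool" where
  "two_path_decomposition E L T \<longleftrightarrow> (\<exists>q1 q2. is_path q1 \<and> is_path q2
     \<and> path_edges q1 \<union> path_edges q2 = E
     \<and> path_edges q1 \<inter> path_edges q2 = {}
     \<and> path_len q1 \<in> L \<and> path_len q2 \<in> L
     \<and> card ({hd q1, last q1} \<inter> T) = 1
     \<and> card ({hd q2, last q2} \<inter> T) = 1)"

text \<open>Edge-disjointness of the two paths follows by counting.\<close>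
lemma two_path_decompositionI:
  assumes "is_path q1" "is_path q2" "path_edges q1 \<union> path_edges q2 = E"
    and "card E = path_len q1 + path_len q2"
    and "path_len q1 \<in> L" "path_len q2 \<in> L"
    and "card ({hd q1, last q1} \<inter> T) = 1" "card ({hd q2, last q2} \<inter> T) = 1"
  shows "two_path_decomposition E L T"
proof -
  have "card (path_edges q1) + card (path_edges q2) =
      card (path_edges q1 \<union> path_edges q2) + card (path_edges q1 \<inter> path_edges q2)"
    by (rule card_Un_Int) auto
  then have "path_edges q1 \<inter> path_edges q2 = {}"
    using assms by (simp add: card_path_edges is_path_def path_len_def)
  then show ?thesis
    using assms unfolding two_path_decomposition_def by blast
qed

definition is_last_hit :: "'a set \<Rightarrow> 'a list \<Rightarrow> nat \<Rightarrow> bool" where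
  "is_last_hit V p z \<longleftrightarrow> z < length p \<and> p ! z \<in> V \<and> (\<forall>j. z < j \<and> j < length p \<longrightarrow> p ! j \<notin> V)"

lemma is_last_hit_exists:
  assumes "V \<inter> set p \<noteq> {}"
  obtains z where "is_last_hit V p z"
proof -
  define S where "S = {i. i < length p \<and> p ! i \<in> V}"
  have "finite S" "S \<noteq> {}"
    using assms by (auto simp: S_def in_set_conv_nth)
  then have "Max S \<in> S" "\<And>j. j \<in> S \<Longrightarrow> j \<le> Max S"
    by simp_all
  then have "is_last_hit V p (Max S)"
    unfolding is_last_hit_def S_def by (auto simp: not_le[symmetric])
  then show ?thesis
    by (rule that)
qed

lemma is_last_hit_ge: "is_last_hit V p z \<Longrightarrow> i < length p \<Longrightarrow> p ! i \<in> V \<Longrightarrow> i \<le> z"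
  unfolding is_last_hit_def by (meson not_le)

lemma is_last_hit_rev_le:
  assumes "is_last_hit V (rev p) z" "i < length p" "p ! i \<in> V"
  shows "length p - 1 - z \<le> i"
proof -
  have "length p - 1 - i \<le> z"
    using is_last_hit_ge[OF assms(1), of "length p - 1 - i"] assms(2,3) by (simp add: rev_nth)
  then show ?thesis
    by linarith
qed

text \<open>Cutting the path at \<open>p ! z\<close> and the cycle at distance \<open>s\<close> from it gives paths of
  lengths \<open>z + s\<close> and \<open>(l - z) + (2 * k - s)\<close>; both lie in \<open>{2 * k, l}\<close> exactly when:\<close>
definition admissible_arc :: "nat \<Rightarrow> nat \<Rightarrow> nat \<Rightarrow> nat \<Rightarrow> bool" where
  "admissible_arc k l z s \<longleftrightarrow> 1 \<le> s \<and> s < 2 * k \<and> (z + s = 2 * k \<or> z + s = l)"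

locale cycle_with_path =
  fixes k l :: nat and c p :: "'a list"
  assumes k_ge_3: "k \<ge> 3"
    and cycle: "is_cycle c" and length_c: "length c = 2 * k"
    and path: "is_path p" and path_len: "path_len p = l"
    and l_cases: "l \<in> {2 * k - 1, 2 * k, 2 * k + 1}"
    and edges_disjoint: "cycle_edges c \<inter> path_edges p = {}"
    and meets: "set c \<inter> set p \<noteq> {}"
    and hd_notin: "hd p \<notin> set c" and last_notin: "last p \<notin> set c"
    and girth: "girth_at_least (cycle_edges c \<union> path_edges p) (2 * k - 2)"
begin

abbreviation decomposable :: bool where
  "decomposable \<equiv> two_path_decomposition (cycle_edges c \<union> path_edges p) {2 * k, l} {hd p, last p}"

lemma distinct_c: "distinct c"
  using cycle by (simp add: is_cycle_def)

lemma distinct_p: "distinct p" and p_ne: "p \<noteq> []"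
  using path by (simp_all add: is_path_def)

lemma length_p: "length p = Suc l"
  using path path_len unfolding is_path_def path_len_def by (cases p) auto

lemma l_bounds: "2 * k - 1 \<le> l" "l \<le> 2 * k + 1"
  using l_cases by auto

lemma nth_0_notin: "p ! 0 \<notin> set c" and nth_l_notin: "p ! l \<notin> set c"
  using hd_notin last_notin p_ne length_p by (simp_all add: hd_conv_nth last_conv_nth)

lemma card_edges: "card (cycle_edges c \<union> path_edges p) = 2 * k + l"
  using card_cycle_edges[OF cycle] card_path_edges[OF distinct_p] length_c length_p edges_disjoint
  by (simp add: card_Un_disjoint cycle_edges_def)

lemma cycle_with_path_relabel:
  assumes "is_cycle c'" "length c' = 2 * k" "set c' = set c" "cycle_edges c' = cycle_edges c"
  shows "cycle_with_path k l c' p"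
  using cycle_with_path_axioms assms unfolding cycle_with_path_def by simp

lemma cycle_with_path_rotate: "cycle_with_path k l (rotate m c) p"
  using cycle length_c
  by (intro cycle_with_path_relabel) (simp_all add: is_cycle_def cycle_edges_rotate)

lemma cycle_with_path_reflect: "cycle_with_path k l (reflect c) p"
proof -
  have "c \<noteq> []"
    using length_c k_ge_3 by auto
  then show ?thesis
    using cycle length_c
    by (intro cycle_with_path_relabel) (simp_all add: is_cycle_reflect cycle_edges_reflect)
qed

lemma cycle_with_path_rev: "cycle_with_path k l c (rev p)"
  using cycle_with_path_axioms p_ne
  unfolding cycle_with_path_def by (simp add: is_path_def path_len_def hd_rev last_rev)

lemma decomposable_rev:
  "two_path_decomposition (cycle_edges c \<union> path_edges (rev p)) {2 * k, l} {hd (rev p), last (rev p)}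
     = decomposable"
  using p_ne by (simp add: hd_rev last_rev insert_commute)

lemma last_hit_bounds:
  assumes "is_last_hit (set c) p z"
  shows "0 < z" "z < l"
  using assms nth_0_notin nth_l_notin length_p unfolding is_last_hit_def
  by (metis gr0I, metis less_Suc_eq)

lemma admissible_arc_exists:
  assumes "is_last_hit (set c) p z"
  obtains s where "admissible_arc k l z s"
proof (cases "l - z < 2 * k")
  case True
  then show ?thesis
    using that[of "l - z"] last_hit_bounds[OF assms] by (simp add: admissible_arc_def)
next
  case False
  then have "z = 1"
    using last_hit_bounds[OF assms] l_bounds by simp
  then show ?thesis
    using that[of "2 * k - 1"] k_ge_3 by (simp add: admissible_arc_def)
qed

lemma segment_arc_girth:
  assumes jj: "j < j'" "j' < length p" and a: "a < 2 * k" and d: "1 \<le> d" "d < 2 * k"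
    and ends: "{p ! j, p ! j'} = {c ! a, c ! ((a + d) mod (2 * k))}"
    and avoid: "\<And>i. 0 < i \<Longrightarrow> i < d \<Longrightarrow> c ! ((a + i) mod (2 * k)) \<notin> set (drop j (take (Suc j') p))"
  shows "2 * k - 2 \<le> j' - j + d"
proof -
  define c' where "c' = rotate a c"
  interpret c': cycle_with_path k l c' p
    unfolding c'_def by (rule cycle_with_path_rotate)
  have nth_c': "c' ! i = c ! ((a + i) mod (2 * k))" if "i < 2 * k" for i
    using that length_c by (simp add: c'_def nth_rotate)
  define sg where "sg = drop j (take (Suc j') p)"
  have sg_distinct: "distinct sg"
    unfolding sg_def using distinct_p by (intro distinct_drop distinct_take)
  have sg: "sg \<noteq> []" "length sg = Suc j' - j" "path_edges sg \<subseteq> path_edges p"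
    "hd sg = p ! j" "last sg = p ! j'"
    using jj path_edges_segment_subset[of j "Suc j'" p]
    by (simp_all add: sg_def hd_drop_conv_nth take_Suc_conv_app_nth)
  have "p ! j \<noteq> p ! j'"
    using jj distinct_p by (simp add: nth_eq_iff_index_eq)
  moreover have "{p ! j, p ! j'} = {c' ! 0, c' ! d}"
    using ends a d nth_c'[of 0] nth_c'[of d] by simp
  ultimately obtain q where q: "set q = set sg" "distinct q" "q \<noteq> []" "path_edges q = path_edges sg"
    "hd q = c' ! d" "last q = c' ! 0"
    using sg sg_distinct by (metis (no_types, lifting) doubleton_eq_iff distinct_rev hd_rev last_rev
        path_edges_rev rev_is_Nil_conv set_rev)
  have "2 * k - 2 \<le> length q - 1 + d"
  proof (rule girth_le_path_plus_arc[OF girth c'.cycle _ q(2,3) _ _ q(5,6) d(1)])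
    show "cycle_edges c' \<subseteq> cycle_edges c \<union> path_edges p"
      using c'.length_c by (simp add: c'_def cycle_edges_rotate)
    show "path_edges q \<subseteq> cycle_edges c \<union> path_edges p"
      using q sg by blast
    show "path_edges q \<inter> cycle_edges c' = {}"
      using q sg edges_disjoint by (auto simp: c'_def cycle_edges_rotate)
    show "d < length c'"
      using d c'.length_c by simp
    show "c' ! i \<notin> set q" if "1 \<le> i" "i < d" for i
      using avoid[of i] that d q(1) nth_c'[of i] by (simp add: sg_def)
  qed
  moreover have "length q = length sg"
    using q sg_distinct by (metis distinct_card)
  ultimately show ?thesis
    using sg jj by simp
qed

lemma segment_between_hits:
  assumes "j' < length p" and between: "\<And>i. j < i \<Longrightarrow> i < j' \<Longrightarrow> p ! i \<notin> set c"
    and "x \<in> set c" "x \<in> set (drop j (take (Suc j') p))"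
  shows "x = p ! j \<or> x = p ! j'"
proof -
  obtain m where "j \<le> m" "m \<le> j'" "x = p ! m"
    using assms(4,1) by (rule in_set_segment)
  then show ?thesis
    using between[of m] assms(3) by (metis le_neq_implies_less)
qed

lemma consecutive_hits_far:
  assumes jj: "j < j'" "j' < length p" and hits: "p ! j \<in> set c" "p ! j' \<in> set c"
    and between: "\<And>i. j < i \<Longrightarrow> i < j' \<Longrightarrow> p ! i \<notin> set c"
  shows "k \<le> j' - j + 2"
proof -
  obtain x y where xy: "x < 2 * k" "c ! x = p ! j" "y < 2 * k" "c ! y = p ! j'"
    using hits length_c by (metis in_set_conv_nth)
  have "p ! j \<noteq> p ! j'"
    using jj distinct_p by (simp add: nth_eq_iff_index_eq)
  then obtain a b where ab: "a < b" "b < 2 * k" "{p ! j, p ! j'} = {c ! a, c ! b}"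
    using xy by (metis insert_commute linorder_neqE_nat)
  have off: "c ! x \<notin> set (drop j (take (Suc j') p))" if x: "x < 2 * k" "x \<noteq> a" "x \<noteq> b" for x
  proof
    assume seg: "c ! x \<in> set (drop j (take (Suc j') p))"
    have "c ! x \<in> set c"
      using x length_c by simp
    then have "c ! x \<in> {c ! a, c ! b}"
      using segment_between_hits[of j' j, OF jj(2) between _ seg] ab by auto
    then show False
      using x ab distinct_c length_c by (auto simp: nth_eq_iff_index_eq)
  qed
  have "2 * k - 2 \<le> j' - j + (b - a)"
  proof (rule segment_arc_girth[OF jj])
    show "{p ! j, p ! j'} = {c ! a, c ! ((a + (b - a)) mod (2 * k))}"
      using ab by simp
    show "c ! ((a + i) mod (2 * k)) \<notin> set (drop j (take (Suc j') p))" if "0 < i" "i < b - a" for i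
      using off[of "a + i"] that ab by simp
  qed (use ab in auto)
  moreover have "2 * k - 2 \<le> j' - j + (2 * k - (b - a))"
  proof (rule segment_arc_girth[OF jj])
    have "(b + (2 * k - (b - a))) mod (2 * k) = a"
      using ab by (simp add: mod_if)
    then show "{p ! j, p ! j'} = {c ! b, c ! ((b + (2 * k - (b - a))) mod (2 * k))}"
      using ab by (simp add: insert_commute)
    show "c ! ((b + i) mod (2 * k)) \<notin> set (drop j (take (Suc j') p))"
      if "0 < i" "i < 2 * k - (b - a)" for i
    proof (rule off)
      have "i < 2 * k" "2 * k - (b - a) < 2 * k"
        using that ab by linarith+
      then show "(b + i) mod (2 * k) \<noteq> b" "(b + i) mod (2 * k) \<noteq> a"
        using add_mod_cancel_left[of b "2 * k" i 0] that ab
          add_mod_cancel_left[of b "2 * k" i "2 * k - (b - a)"]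
          \<open>(b + (2 * k - (b - a))) mod (2 * k) = a\<close>
        by auto
    qed (use ab in simp)
  qed (use ab in auto)
  ultimately show ?thesis
    by linarith
qed

lemma hits_far_apart:
  assumes jj: "j < j'" "j' < length p" and hits: "p ! j \<in> set c" "p ! j' \<in> set c"
  shows "k \<le> j' - j + 2"
proof -
  define h where "h = (LEAST i. j < i \<and> p ! i \<in> set c)"
  have h: "j < h" "p ! h \<in> set c" "h \<le> j'"
    using LeastI[of "\<lambda>i. j < i \<and> p ! i \<in> set c" j'] Least_le[of "\<lambda>i. j < i \<and> p ! i \<in> set c" j']
      jj hits unfolding h_def by auto
  have "p ! i \<notin> set c" if "j < i" "i < h" for i
    using not_less_Least[of i "\<lambda>i. j < i \<and> p ! i \<in> set c"] that unfolding h_def by blast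
  then have "k \<le> h - j + 2"
    using consecutive_hits_far[of j h] h jj hits by simp
  then show ?thesis
    using h by linarith
qed

lemma after_last_hit_disjoint:
  assumes z: "is_last_hit (set c) p z" and anchor: "c ! 0 = p ! z" and s: "1 \<le> s"
  shows "set (drop s c) \<inter> set (drop z p) = {}"
proof (rule ccontr)
  assume "set (drop s c) \<inter> set (drop z p) \<noteq> {}"
  then obtain i j where ij: "s \<le> i" "i < 2 * k" "z \<le> j" "j < length p" "c ! i = p ! j"
    using length_c by (auto simp: in_set_conv_nth) (metis add.commute le_add1 less_diff_conv)
  then have "j \<le> z"
    using is_last_hit_ge[OF z] length_c by (metis nth_mem)
  then have "c ! i = c ! 0"
    using ij anchor by simp
  then show False
    using ij s distinct_c length_c by (simp add: nth_eq_iff_index_eq)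
qed

lemma split_at_last_hit:
  assumes z: "is_last_hit (set c) p z" and anchor: "c ! 0 = p ! z"
    and s: "admissible_arc k l z s" and free: "\<And>i. 1 \<le> i \<Longrightarrow> i \<le> s \<Longrightarrow> c ! i \<notin> set p"
  shows decomposable
proof -
  define q1 where "q1 = take (Suc z) p @ take s (tl c)"
  define q2 where "q2 = rev (drop s c @ drop z p)"
  have zl: "z < length p" "0 < z" "z < l"
    using z last_hit_bounds[OF z] by (auto simp: is_last_hit_def)
  have s1: "1 \<le> s" "s < 2 * k"
    using s by (auto simp: admissible_arc_def)
  have "set (take (Suc z) p) \<inter> set (take s (tl c)) = {}"
    using free by (fastforce dest: in_set_takeD elim: in_set_take_tl)
  then have d1: "distinct q1"
    unfolding q1_def using distinct_p distinct_c by (cases c) auto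
  have "set (drop s c) \<inter> set (drop z p) = {}"
    using after_last_hit_disjoint[OF z anchor s1(1)] .
  then have d2: "distinct q2"
    unfolding q2_def using distinct_p distinct_c by (auto simp: Int_commute)
  have arc: "take s (tl c) \<noteq> []"
    using s1 length_c by (cases c) auto
  then have "last (take s (tl c)) = tl c ! (s - 1)"
    using s1 length_c by (simp add: last_conv_nth)
  also have "\<dots> = c ! s"
    using s1 length_c by (cases c) auto
  finally have ends: "hd q1 = hd p" "last q1 = c ! s" "hd q2 = last p" "last q2 = c ! s"
    unfolding q1_def q2_def using arc s1 length_c zl p_ne
    by (auto simp: last_rev hd_rev hd_drop_conv_nth)
  have "c ! s \<in> set c"
    using s1 length_c by simp
  then have "hd p \<noteq> last p" "c ! s \<notin> {hd p, last p}"
    using distinct_p length_p zl p_ne hd_notin last_notin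
    by (auto simp: hd_conv_nth last_conv_nth nth_eq_iff_index_eq)
  then have ends_card: "card ({hd q1, last q1} \<inter> {hd p, last p}) = 1"
    "card ({hd q2, last q2} \<inter> {hd p, last p}) = 1"
    unfolding ends by (auto simp: Int_insert_left)
  have union: "path_edges q1 \<union> path_edges q2 = cycle_edges c \<union> path_edges p"
    unfolding q1_def q2_def using path_edges_cut_cycle[OF zl(1) anchor s1(1)] s1 length_c by simp
  have len: "path_len q1 = z + s" "path_len q2 = (l - z) + (2 * k - s)"
    unfolding q1_def q2_def path_len_def using zl s1 length_c length_p by (cases c; simp)+
  then have "path_len q1 \<in> {2 * k, l}" "path_len q2 \<in> {2 * k, l}"
    using s zl by (auto simp: admissible_arc_def)
  moreover have "is_path q1" "is_path q2"
    using d1 d2 p_ne zl by (simp_all add: is_path_def q1_def q2_def)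
  moreover have "card (cycle_edges c \<union> path_edges p) = path_len q1 + path_len q2"
    using card_edges len s1 zl by simp
  ultimately show ?thesis
    using union ends_card by (intro two_path_decompositionI[of q1 q2])
qed

end

section \<open>Returns of the cycle to the path\<close>

text \<open>The cycle is labelled from the last vertex \<open>p ! z\<close> of the path on it, no admissible arc
  from there avoids the path, and \<open>c ! e = p ! pos\<close> is the first return of the cycle to the path.\<close>
locale return_to_path = cycle_with_path +
  fixes z e pos :: nat
  assumes last_hit: "is_last_hit (set c) p z"
    and anchor: "c ! 0 = p ! z"
    and e_pos: "1 \<le> e" and e_less: "e < 2 * k"
    and pos_less_length: "pos < length p"
    and return: "c ! e = p ! pos"
    and before_return: "\<And>i. 1 \<le> i \<Longrightarrow> i < e \<Longrightarrow> c ! i \<notin> set p"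
    and e_le_admissible: "\<And>s. admissible_arc k l z s \<Longrightarrow> e \<le> s"

text \<open>Returns in both directions: \<open>bwd\<close> walks the same cycle backwards from \<open>c ! 0\<close>.\<close>
locale returns_to_path = cycle_with_path +
  fwd: return_to_path k l c p z e1 pos1 + bwd: return_to_path k l "reflect c" p z e2 pos2
  for z e1 e2 pos1 pos2

context cycle_with_path
begin

lemma return_to_path_exists:
  assumes z: "is_last_hit (set c) p z" and anchor: "c ! 0 = p ! z" and nd: "\<not> decomposable"
  obtains e pos where "return_to_path k l c p z e pos"
proof -
  have blocked: "\<exists>i. 1 \<le> i \<and> i \<le> s \<and> c ! i \<in> set p" if "admissible_arc k l z s" for s
    using split_at_last_hit[OF z anchor that] nd by blast
  define e where "e = (LEAST i. 1 \<le> i \<and> c ! i \<in> set p)"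
  have e_le: "e \<le> s" if "admissible_arc k l z s" for s
    using blocked[OF that] Least_le[of "\<lambda>i. 1 \<le> i \<and> c ! i \<in> set p"] unfolding e_def
    by (meson le_trans)
  obtain s0 where s0: "admissible_arc k l z s0"
    using admissible_arc_exists[OF z] .
  then obtain i0 where "1 \<le> i0" "c ! i0 \<in> set p"
    using blocked by blast
  then have "1 \<le> e" "c ! e \<in> set p"
    using LeastI[of "\<lambda>i. 1 \<le> i \<and> c ! i \<in> set p"] unfolding e_def by blast+
  moreover have "c ! i \<notin> set p" if "1 \<le> i" "i < e" for i
    using not_less_Least[of i "\<lambda>i. 1 \<le> i \<and> c ! i \<in> set p"] that unfolding e_def by blast
  moreover have "e < 2 * k"
    using e_le[OF s0] s0 by (simp add: admissible_arc_def)
  moreover obtain pos where "pos < length p" "c ! e = p ! pos"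
    using \<open>c ! e \<in> set p\<close> by (metis in_set_conv_nth)
  ultimately have "return_to_path k l c p z e pos"
    using z anchor e_le by unfold_locales auto
  then show ?thesis
    by (rule that)
qed

lemma returns_to_path_exists:
  assumes z: "is_last_hit (set c) p z" and nd: "\<not> decomposable"
  obtains c' e1 e2 pos1 pos2 where "returns_to_path k l c' p z e1 e2 pos1 pos2"
    "set c' = set c" "cycle_edges c' = cycle_edges c"
proof -
  obtain a where a: "a < 2 * k" "c ! a = p ! z"
    using z length_c by (auto simp: is_last_hit_def in_set_conv_nth)
  define c' where "c' = rotate a c"
  interpret c': cycle_with_path k l c' p
    unfolding c'_def by (rule cycle_with_path_rotate)
  interpret r: cycle_with_path k l "reflect c'" p
    by (rule c'.cycle_with_path_reflect)
  have "c' \<noteq> []"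
    using c'.length_c k_ge_3 by auto
  then have same: "set c' = set c" "cycle_edges c' = cycle_edges c"
    "set (reflect c') = set c" "cycle_edges (reflect c') = cycle_edges c"
    by (simp_all add: c'_def cycle_edges_rotate cycle_edges_reflect)
  have anchor: "c' ! 0 = p ! z" "reflect c' ! 0 = p ! z"
    using a length_c c'.length_c by (simp_all add: c'_def nth_rotate nth_reflect)
  obtain e1 pos1 where "return_to_path k l c' p z e1 pos1"
    using c'.return_to_path_exists[OF _ anchor(1)] z nd same by auto
  moreover obtain e2 pos2 where "return_to_path k l (reflect c') p z e2 pos2"
    using r.return_to_path_exists[OF _ anchor(2)] z nd same by auto
  ultimately show ?thesis
    using that same c'.cycle_with_path_axioms by (meson returns_to_path.intro)
qed

end

context return_to_path
begin

lemma return_hit: "p ! pos \<in> set c"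
  using return e_less length_c by (metis nth_mem)

lemma pos_less_last_hit: "pos < z"
proof -
  have "pos \<le> z"
    using is_last_hit_ge[OF last_hit pos_less_length return_hit] .
  moreover have "c ! e \<noteq> c ! 0"
    using distinct_c e_pos e_less length_c by (simp add: nth_eq_iff_index_eq)
  ultimately show ?thesis
    using return anchor by (metis le_neq_implies_less)
qed

lemma pos_ge_1: "1 \<le> pos"
  using return_hit nth_0_notin by (cases pos) auto

lemma return_girth: "2 * k - 2 \<le> z - pos + e"
proof (rule segment_arc_girth[of pos z 0 e])
  show "{p ! pos, p ! z} = {c ! 0, c ! ((0 + e) mod (2 * k))}"
    using return anchor e_less by auto
  show "c ! ((0 + i) mod (2 * k)) \<notin> set (drop pos (take (Suc z) p))" if "0 < i" "i < e" for i
    using before_return[of i] that e_less by (auto dest: in_set_dropD in_set_takeD)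
qed (use pos_less_last_hit last_hit e_pos e_less k_ge_3 in \<open>auto simp: is_last_hit_def\<close>)

lemma return_bounds:
  shows "z < 2 * k \<Longrightarrow> pos \<le> 2"
    and "2 * k \<le> z \<Longrightarrow> z = 2 * k \<and> l = 2 * k + 1 \<and> e = 1 \<and> pos \<le> 3"
proof -
  note z = last_hit_bounds[OF last_hit]
  show "pos \<le> 2" if "z < 2 * k"
  proof -
    have "e \<le> 2 * k - z"
      using e_le_admissible[of "2 * k - z"] that z by (simp add: admissible_arc_def)
    then show ?thesis
      using return_girth pos_less_last_hit that by linarith
  qed
  show "z = 2 * k \<and> l = 2 * k + 1 \<and> e = 1 \<and> pos \<le> 3" if "2 * k \<le> z"
  proof -
    have zl: "z = 2 * k" "l = 2 * k + 1"
      using that z l_bounds by linarith+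
    then have "e = 1"
      using e_le_admissible[of 1] e_pos k_ge_3 by (simp add: admissible_arc_def)
    then show ?thesis
      using zl return_girth pos_less_last_hit by linarith
  qed
qed

end

context returns_to_path
begin

lemma return2: "c ! (2 * k - e2) = p ! pos2"
  using bwd.return bwd.e_pos bwd.e_less length_c by (simp add: nth_reflect)

lemma before_return2: "2 * k - e2 < i \<Longrightarrow> i < 2 * k \<Longrightarrow> c ! i \<notin> set p"
  using bwd.before_return[of "2 * k - i"] length_c by (simp add: nth_reflect)

lemma return_hits: "p ! pos1 \<in> set c" "p ! pos2 \<in> set c"
proof -
  show "p ! pos1 \<in> set c"
    by (rule fwd.return_hit)
  have "2 * k - e2 < length c"
    using bwd.e_pos length_c k_ge_3 by simp
  then show "p ! pos2 \<in> set c"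
    using return2 by (metis nth_mem)
qed

lemma returns_cases: "(pos1 = pos2 \<and> e1 + e2 = 2 * k) \<or> (pos1 \<noteq> pos2 \<and> e1 + e2 < 2 * k)"
proof -
  have "e1 \<le> 2 * k - e2"
    using fwd.before_return[of "2 * k - e2"] return2 bwd.pos_less_length bwd.e_less by force
  moreover have "c ! e1 = c ! (2 * k - e2) \<longleftrightarrow> e1 = 2 * k - e2"
    using distinct_c length_c fwd.e_less bwd.e_pos by (simp add: nth_eq_iff_index_eq)
  moreover have "p ! pos1 = p ! pos2 \<longleftrightarrow> pos1 = pos2"
    using distinct_p fwd.pos_less_length bwd.pos_less_length by (simp add: nth_eq_iff_index_eq)
  ultimately have "e1 = 2 * k - e2 \<longleftrightarrow> pos1 = pos2"
    using fwd.return return2 by simp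
  then show ?thesis
    using \<open>e1 \<le> 2 * k - e2\<close> bwd.e_less by linarith
qed

lemma returns_segment:
  assumes "pos1 \<noteq> pos2"
  shows "min pos1 pos2 < max pos1 pos2" "max pos1 pos2 < z" "max pos1 pos2 < length p"
    "{p ! min pos1 pos2, p ! max pos1 pos2} = {p ! pos1, p ! pos2}"
  using assms fwd.pos_less_last_hit bwd.pos_less_last_hit fwd.pos_less_length bwd.pos_less_length
  by (auto simp: min_def max_def insert_commute)

lemma anchor_arc_off_path:
  assumes "0 < i" "i < e1 + e2" "i \<noteq> e2"
  shows "c ! ((2 * k - e2 + i) mod (2 * k)) \<notin> set p"
proof (cases "i < e2")
  case True
  then have "2 * k - e2 < 2 * k - e2 + i" "2 * k - e2 + i < 2 * k"
    using assms bwd.e_less by linarith+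
  then show ?thesis
    using before_return2[of "2 * k - e2 + i"] by simp
next
  case False
  then have "(2 * k - e2 + i) mod (2 * k) = i - e2" "1 \<le> i - e2" "i - e2 < e1"
    using assms fwd.e_less bwd.e_less by (simp_all add: mod_if)
  then show ?thesis
    using fwd.before_return[of "i - e2"] by simp
qed

lemma arc_through_anchor:
  assumes ne: "pos1 \<noteq> pos2"
  shows "2 * k - 2 \<le> (max pos1 pos2 - min pos1 pos2) + e1 + e2"
proof -
  note seg = returns_segment[OF ne]
  have sum: "e1 + e2 < 2 * k"
    using returns_cases ne by simp
  have "2 * k - 2 \<le> (max pos1 pos2 - min pos1 pos2) + (e1 + e2)"
  proof (rule segment_arc_girth[OF seg(1,3), of "2 * k - e2"])
    have "(2 * k - e2 + (e1 + e2)) mod (2 * k) = e1"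
      using sum bwd.e_less by (simp add: mod_if)
    then show "{p ! min pos1 pos2, p ! max pos1 pos2} =
        {c ! (2 * k - e2), c ! ((2 * k - e2 + (e1 + e2)) mod (2 * k))}"
      using fwd.return return2 seg(4) by (simp add: insert_commute)
    show "c ! ((2 * k - e2 + i) mod (2 * k)) \<notin> set (drop (min pos1 pos2) (take (Suc (max pos1 pos2)) p))"
      (is "?x \<notin> ?segment") if i: "0 < i" "i < e1 + e2" for i
    proof
      assume "?x \<in> ?segment"
      then obtain m where m: "m \<le> max pos1 pos2" "c ! ((2 * k - e2 + i) mod (2 * k)) = p ! m"
        using seg(3) by (rule in_set_segment)
      then have "m < z" "p ! m \<in> set p"
        using seg by auto
      moreover have "i = e2"
        using anchor_arc_off_path[OF i] m \<open>p ! m \<in> set p\<close> by auto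
      ultimately show False
        using m fwd.anchor distinct_p fwd.last_hit bwd.e_less
        by (simp add: nth_eq_iff_index_eq is_last_hit_def)
    qed
  qed (use sum bwd.e_less bwd.e_pos fwd.e_pos in auto)
  then show ?thesis
    by simp
qed

lemma arc_avoiding_anchor:
  assumes adjacent: "pos1 = Suc pos2 \<or> pos2 = Suc pos1"
  shows "2 * k - 2 \<le> 1 + (2 * k - e1 - e2)"
proof -
  have ne: "pos1 \<noteq> pos2"
    using adjacent by auto
  note seg = returns_segment[OF ne]
  have sum: "e1 + e2 < 2 * k"
    using returns_cases ne by simp
  have "2 * k - 2 \<le> (max pos1 pos2 - min pos1 pos2) + (2 * k - e1 - e2)"
  proof (rule segment_arc_girth[OF seg(1,3), of e1])
    have "(e1 + (2 * k - e1 - e2)) mod (2 * k) = 2 * k - e2"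
      using sum bwd.e_pos by simp
    then show "{p ! min pos1 pos2, p ! max pos1 pos2} =
        {c ! e1, c ! ((e1 + (2 * k - e1 - e2)) mod (2 * k))}"
      using fwd.return return2 seg(4) by simp
    show "c ! ((e1 + i) mod (2 * k)) \<notin> set (drop (min pos1 pos2) (take (Suc (max pos1 pos2)) p))"
      (is "?x \<notin> ?segment") if i: "0 < i" "i < 2 * k - e1 - e2" for i
    proof
      assume "?x \<in> ?segment"
      then obtain m where m: "min pos1 pos2 \<le> m" "m \<le> max pos1 pos2" "c ! (e1 + i) = p ! m"
        using seg(3) i by (auto elim: in_set_segment)
      then have "m = pos1 \<or> m = pos2"
        using adjacent by auto
      then have "c ! (e1 + i) = c ! e1 \<or> c ! (e1 + i) = c ! (2 * k - e2)"
        using m fwd.return return2 by auto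
      moreover have "e1 + i < 2 * k" "e1 + i \<noteq> 2 * k - e2"
        using i by linarith+
      ultimately show False
        using distinct_c length_c i bwd.e_pos fwd.e_less by (auto simp: nth_eq_iff_index_eq)
    qed
  qed (use sum fwd.e_less fwd.e_pos in auto)
  moreover have "max pos1 pos2 - min pos1 pos2 = 1"
    using adjacent by auto
  ultimately show ?thesis
    by simp
qed

lemma distinct_returns_imp_k3:
  assumes ne: "pos1 \<noteq> pos2"
  shows "k = 3"
proof (rule ccontr)
  assume "k \<noteq> 3"
  then have k4: "4 \<le> k"
    using k_ge_3 by simp
  note seg = returns_segment[OF ne]
  have "k \<le> max pos1 pos2 - min pos1 pos2 + 2"
    using hits_far_apart[OF seg(1,3)] return_hits by (simp add: min_def max_def)
  moreover have "max pos1 pos2 \<le> 3" "1 \<le> min pos1 pos2"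
    using fwd.return_bounds bwd.return_bounds fwd.pos_ge_1 bwd.pos_ge_1 k_ge_3
    by (cases "z < 2 * k"; force)+
  ultimately have "max pos1 pos2 = 3"
    using k4 by linarith
  then have "pos1 = 3 \<or> pos2 = 3"
    by (simp add: max_def split: if_splits)
  then have "\<not> z < 2 * k"
    using fwd.return_bounds(1) bwd.return_bounds(1) by auto
  then have "e1 = 1" "e2 = 1"
    using fwd.return_bounds(2) bwd.return_bounds(2) by auto
  then show False
    using arc_through_anchor[OF ne] \<open>max pos1 pos2 = 3\<close> \<open>1 \<le> min pos1 pos2\<close> k4 by linarith
qed

lemma distinct_returns_k3_cases:
  assumes k3: "k = 3" and ne: "pos1 \<noteq> pos2"
  shows "(z = 4 \<and> min pos1 pos2 = 1)
    \<or> (z = 6 \<and> l = 7 \<and> e1 = 1 \<and> e2 = 1 \<and> {pos1, pos2} = {1, 3})"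
proof (cases "z < 2 * k")
  case True
  have "pos1 \<le> 2" "pos2 \<le> 2"
    using fwd.return_bounds(1) bwd.return_bounds(1) True by auto
  then have adjacent: "pos1 = Suc pos2 \<or> pos2 = Suc pos1" and pos: "pos1 + pos2 = 3"
    and min: "min pos1 pos2 = 1"
    using ne fwd.pos_ge_1 bwd.pos_ge_1 by auto
  have "max pos1 pos2 - min pos1 pos2 = 1"
    using adjacent by auto
  then have sum: "e1 + e2 = 3"
    using arc_through_anchor[OF ne] arc_avoiding_anchor[OF adjacent] k3 by linarith
  have "e1 \<le> 2 * k - z" "e2 \<le> 2 * k - z"
    using fwd.e_le_admissible bwd.e_le_admissible last_hit_bounds[OF fwd.last_hit] True
    by (simp_all add: admissible_arc_def)
  then have "z = 4"
    using sum pos fwd.return_girth bwd.return_girth fwd.pos_less_last_hit bwd.pos_less_last_hit k3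
    by linarith
  then show ?thesis
    using min by simp
next
  case False
  then have z: "z = 6" "l = 7" "e1 = 1" "e2 = 1" "pos1 \<le> 3" "pos2 \<le> 3"
    using fwd.return_bounds(2) bwd.return_bounds(2) k3 by auto
  then have "(pos1 = 1 \<and> pos2 = 3) \<or> (pos1 = 3 \<and> pos2 = 1)"
    using arc_through_anchor[OF ne] fwd.pos_ge_1 bwd.pos_ge_1 k3
    by (auto simp: max_def min_def split: if_splits)
  then have "{pos1, pos2} = {1, 3}"
    by auto
  then show ?thesis
    using z by simp
qed

lemma equal_returns_bounds:
  assumes eq: "pos1 = pos2"
  shows "z \<le> k" "z + k \<le> l"
proof -
  have sum: "e1 + e2 = 2 * k"
    using returns_cases eq by simp
  note z = last_hit_bounds[OF fwd.last_hit]
  have "z < 2 * k"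
  proof (rule ccontr)
    assume "\<not> z < 2 * k"
    then have "e1 = 1" "e2 = 1"
      using fwd.return_bounds(2) bwd.return_bounds(2) by auto
    then show False
      using sum k_ge_3 by simp
  qed
  then have "e1 \<le> 2 * k - z" "e2 \<le> 2 * k - z"
    using fwd.e_le_admissible bwd.e_le_admissible z by (simp_all add: admissible_arc_def)
  then show "z \<le> k"
    using sum \<open>z < 2 * k\<close> by linarith
  show "z + k \<le> l"
  proof (cases "l - z < 2 * k")
    case True
    then have "e1 \<le> l - z" "e2 \<le> l - z"
      using fwd.e_le_admissible bwd.e_le_admissible z by (simp_all add: admissible_arc_def)
    then show ?thesis
      using sum z by linarith
  qed (use z in linarith)
qed

lemma late_last_hit_returns:
  assumes late: "z + 1 = l"
  shows "e1 = 1" "e2 = 1" "pos1 \<noteq> pos2" "pos1 + 2 * k \<le> z + 3" "pos2 + 2 * k \<le> z + 3"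
proof -
  have "admissible_arc k l z 1"
    using late k_ge_3 by (simp add: admissible_arc_def)
  then show e: "e1 = 1" "e2 = 1"
    using fwd.e_le_admissible bwd.e_le_admissible fwd.e_pos bwd.e_pos by (simp_all add: le_antisym)
  then show "pos1 \<noteq> pos2"
    using returns_cases k_ge_3 by auto
  show "pos1 + 2 * k \<le> z + 3" "pos2 + 2 * k \<le> z + 3"
    using fwd.return_girth bwd.return_girth fwd.pos_less_last_hit bwd.pos_less_last_hit e k_ge_3
    by linarith+
qed

lemma returns_at_neighbours_relabel:
  assumes "e1 = 1" "e2 = 1"
  obtains d where "is_cycle d" "length d = 2 * k" "set d = set c" "cycle_edges d = cycle_edges c"
    "d ! 0 = p ! z" "d ! 1 = p ! min pos1 pos2" "d ! (2 * k - 1) = p ! max pos1 pos2"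
proof (cases "pos1 \<le> pos2")
  case True
  then show ?thesis
    using that[of c] cycle length_c fwd.anchor fwd.return return2 assms by simp
next
  case False
  have "c \<noteq> []"
    using length_c k_ge_3 by auto
  moreover have "reflect c ! 0 = c ! 0" "reflect c ! 1 = c ! (2 * k - 1)"
    "reflect c ! (2 * k - 1) = c ! 1"
    using length_c k_ge_3 by (simp_all add: nth_reflect)
  ultimately show ?thesis
    using that[of "reflect c"] False cycle length_c fwd.anchor fwd.return return2 assms
    by (simp add: nth_reflect is_cycle_reflect cycle_edges_reflect)
qed

end

lemma (in cycle_with_path) equal_returns_impossible:
  assumes "returns_to_path k l c1 p z e1 e2 pos pos" "set c1 = set c"
    and "returns_to_path k l c2 (rev p) zr f1 f2 r r" "set c2 = set c"
  shows False
proof -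
  interpret P: returns_to_path k l c1 p z e1 e2 pos pos
    by fact
  interpret R: returns_to_path k l c2 "rev p" zr f1 f2 r r
    by fact
  have "l - zr \<le> pos"
    using is_last_hit_rev_le[OF R.fwd.last_hit P.fwd.pos_less_length] P.fwd.return_hit assms
      length_p by simp
  \<comment> \<open>but the bounds put the first vertex \<open>p ! (l - zr)\<close> of the path on the cycle beyond \<open>p ! z\<close>\<close>
  then show False
    using P.equal_returns_bounds R.equal_returns_bounds P.fwd.pos_less_last_hit by linarith
qed

section \<open>The case k = 3\<close>

context cycle_with_path
begin

lemma k3_configuration:
  assumes k3: "k = 3" and l7: "l = 7"
    and d: "is_cycle d" "length d = 6" "set d = set c" "cycle_edges d = cycle_edges c"
    and d_nth: "d ! 0 = p ! 6" "d ! 1 = p ! 1" "d ! 5 = p ! 3"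
    and chord: "{p ! 1, p ! 4} \<in> cycle_edges c"
  obtains x u w y a0 a1 a2 a3 a4 a5 where "p = [x, a1, u, a5, a2, w, a0, y]"
    "distinct [a0, a1, a2, a3, a4, a5]" "set c = {a0, a1, a2, a3, a4, a5}"
    "cycle_edges c = {{a0, a1}, {a1, a2}, {a2, a3}, {a3, a4}, {a4, a5}, {a5, a0}}"
    "u \<noteq> a4" "w \<noteq> a4"
proof -
  obtain a0 a1 a2 a3 a4 a5 where dd: "d = [a0, a1, a2, a3, a4, a5]"
    using d(2) by (auto simp: numeral_eq_Suc length_Suc_conv)
  obtain x p1 u p3 p4 w p6 y where pp: "p = [x, p1, u, p3, p4, w, p6, y]"
    using length_p l7 by (auto simp: numeral_eq_Suc length_Suc_conv)
  have da: "distinct [a0, a1, a2, a3, a4, a5]"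
    using d(1) dd by (simp add: is_cycle_def)
  have labels: "p6 = a0" "p1 = a1" "p3 = a5"
    using d_nth dd pp by auto
  have C: "cycle_edges c = {{a0, a1}, {a1, a2}, {a2, a3}, {a3, a4}, {a4, a5}, {a5, a0}}"
    using d(4) dd by (simp add: cycle_edges_def)
  have P: "path_edges p = {{x, p1}, {p1, u}, {u, p3}, {p3, p4}, {p4, w}, {w, p6}, {p6, y}}"
    using pp by simp
  have "{a1, p4} \<in> cycle_edges c" "p4 \<noteq> a0" "p4 \<noteq> a1"
    using chord pp labels distinct_p by auto
  then have p4: "p4 = a2"
    using C da by (auto simp: doubleton_eq_iff)
  have "u \<noteq> a4"
    using edges_disjoint C P labels by auto
  moreover have "w \<noteq> a4"
  proof
    assume "w = a4"
    then have "cycle_edges [a4, a0, a5] \<subseteq> cycle_edges c \<union> path_edges p"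
      using C P labels by (auto simp: cycle_edges_def insert_commute)
    moreover have "is_cycle [a4, a0, a5]"
      using da by (auto simp: is_cycle_def)
    ultimately show False
      using girth k3 unfolding girth_at_least_def by fastforce
  qed
  moreover have "set c = {a0, a1, a2, a3, a4, a5}"
    using d(3) dd by simp
  ultimately show ?thesis
    using that[of x a1 u a5 a2 w a0 y a3 a4] pp labels p4 da C by simp
qed

lemma k3_decomposition:
  assumes k3: "k = 3" and l7: "l = 7"
    and d: "is_cycle d" "length d = 6" "set d = set c" "cycle_edges d = cycle_edges c"
    and d_nth: "d ! 0 = p ! 6" "d ! 1 = p ! 1" "d ! 5 = p ! 3"
    and chord: "{p ! 1, p ! 4} \<in> cycle_edges c"
  shows decomposable
proof -
  obtain x u w y a0 a1 a2 a3 a4 a5 where pp: "p = [x, a1, u, a5, a2, w, a0, y]"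
    and da: "distinct [a0, a1, a2, a3, a4, a5]" and sc: "set c = {a0, a1, a2, a3, a4, a5}"
    and C: "cycle_edges c = {{a0, a1}, {a1, a2}, {a2, a3}, {a3, a4}, {a4, a5}, {a5, a0}}"
    and uw: "u \<noteq> a4" "w \<noteq> a4"
    using k3_configuration[OF assms] .
  have dp: "distinct [x, a1, u, a5, a2, w, a0, y]"
    using distinct_p pp by simp
  have ends: "x \<notin> {a0, a1, a2, a3, a4, a5}" "y \<notin> {a0, a1, a2, a3, a4, a5}" "hd p = x" "last p = y"
    using hd_notin last_notin pp sc by auto
  define q1 where "q1 = [x, a1, a0, a5, a2, a3, a4]"
  define q2 where "q2 = [y, a0, w, a2, a1, u, a5, a4]"
  have "is_path q1" "is_path q2"
    using da dp uw ends by (auto simp: q1_def q2_def is_path_def)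
  moreover have "path_edges q1 \<union> path_edges q2 = cycle_edges c \<union> path_edges p"
    unfolding C pp q1_def q2_def by (auto simp: insert_commute)
  moreover have "x \<noteq> y" "a4 \<noteq> x" "a4 \<noteq> y"
    using dp ends by auto
  ultimately show ?thesis
    using card_edges k3 l7 ends
    by (intro two_path_decompositionI[of q1 q2])
      (auto simp: q1_def q2_def path_len_def Int_insert_left)
qed

lemma reverse_returns_first_hit_1:
  assumes k3: "k = 3"
    and "returns_to_path k l c2 (rev p) zr f1 f2 r1 r2"
    and "set c2 = set c" "cycle_edges c2 = cycle_edges c"
    and hit1: "p ! 1 \<in> set c" and z: "is_last_hit (set c) p z"
  shows "4 < z" and "l = 7 \<Longrightarrow> {p ! 1, p ! 4} \<in> cycle_edges c"
proof -
  interpret R: returns_to_path k l c2 "rev p" zr f1 f2 r1 r2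
    by fact
  note zr = R.last_hit_bounds[OF R.fwd.last_hit]
  have "l - zr \<le> 1"
    using is_last_hit_rev_le[OF R.fwd.last_hit, of 1] hit1 assms length_p l_bounds by simp
  then have late: "zr + 1 = l"
    using zr by linarith
  note f = R.late_last_hit_returns[OF late]
  have rev_hit: "rev p ! r = p ! (l - r)" if "r \<le> l" for r
    using that length_p by (simp add: rev_nth)
  have r: "r1 < zr" "r2 < zr"
    using R.fwd.pos_less_last_hit R.bwd.pos_less_last_hit .
  then have "l - r1 \<le> z" "l - r2 \<le> z"
    using R.return_hits rev_hit zr is_last_hit_ge[OF z] length_p assms by auto
  then show "4 < z"
    using f late k3 by linarith
  assume l7: "l = 7"
  then have "{r1, r2} = {1, 3}"
    using R.distinct_returns_k3_cases[OF k3 f(3)] late by auto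
  moreover have "c2 ! 0 = p ! 1" "c2 ! 1 = p ! (7 - r1)" "c2 ! 5 = p ! (7 - r2)"
    using R.fwd.anchor R.fwd.return R.return2 f r late l7 k3 rev_hit by auto
  moreover have "{c2 ! 0, c2 ! 1} \<in> cycle_edges c" "{c2 ! 0, c2 ! 5} \<in> cycle_edges c"
    using cycle_edges_0_1[OF R.cycle] cycle_edges_0_last[OF R.cycle] R.length_c assms k3 by auto
  ultimately show "{p ! 1, p ! 4} \<in> cycle_edges c"
    by (auto simp: doubleton_eq_iff)
qed

lemma distinct_returns_decomposable:
  assumes k3: "k = 3"
    and "returns_to_path k l c1 p z e1 e2 pos1 pos2"
    and "set c1 = set c" "cycle_edges c1 = cycle_edges c"
    and ne: "pos1 \<noteq> pos2"
    and R: "returns_to_path k l c2 (rev p) zr f1 f2 r1 r2"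
      "set c2 = set c" "cycle_edges c2 = cycle_edges c"
  shows decomposable
proof -
  interpret P: returns_to_path k l c1 p z e1 e2 pos1 pos2
    by fact
  have z: "is_last_hit (set c) p z"
    using P.fwd.last_hit assms by simp
  have hits: "p ! pos1 \<in> set c" "p ! pos2 \<in> set c"
    using P.return_hits assms by simp_all
  consider "z = 4" "min pos1 pos2 = 1" | "z = 6" "l = 7" "{pos1, pos2} = {1, 3}"
    using P.distinct_returns_k3_cases[OF k3 ne] by blast
  then show ?thesis
  proof cases
    case 1
    then have "p ! 1 \<in> set c"
      using hits by (metis min_def)
    then show ?thesis
      using reverse_returns_first_hit_1(1)[OF k3 R _ z] 1 by simp
  next
    case 2
    then have "p ! 1 \<in> set c"
      using hits by (auto simp: doubleton_eq_iff)
    then have chord: "{p ! 1, p ! 4} \<in> cycle_edges c"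
      using reverse_returns_first_hit_1(2)[OF k3 R _ z] 2 by simp
    have e: "e1 = 1" "e2 = 1" and minmax: "min pos1 pos2 = 1" "max pos1 pos2 = 3"
      using P.distinct_returns_k3_cases[OF k3 ne] 2 by (auto simp: doubleton_eq_iff)
    obtain d where "is_cycle d" "length d = 2 * k" "set d = set c1" "cycle_edges d = cycle_edges c1"
      "d ! 0 = p ! z" "d ! 1 = p ! min pos1 pos2" "d ! (2 * k - 1) = p ! max pos1 pos2"
      using P.returns_at_neighbours_relabel[OF e] .
    then show ?thesis
      using k3_decomposition[OF k3 2(2), of d] chord minmax 2 k3 assms by simp
  qed
qed

end

theorem (in cycle_with_path) decomposition: decomposable
proof (rule ccontr)
  assume nd: "\<not> decomposable"
  interpret R: cycle_with_path k l c "rev p"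
    by (rule cycle_with_path_rev)
  obtain z zr where z: "is_last_hit (set c) p z" and zr: "is_last_hit (set c) (rev p) zr"
    using is_last_hit_exists meets by (metis set_rev)
  obtain c1 e1 e2 pos1 pos2 where P: "returns_to_path k l c1 p z e1 e2 pos1 pos2"
    "set c1 = set c" "cycle_edges c1 = cycle_edges c"
    using returns_to_path_exists[OF z nd] .
  have nd': "\<not> two_path_decomposition (cycle_edges c \<union> path_edges (rev p)) {2 * k, l}
      {hd (rev p), last (rev p)}"
    using nd decomposable_rev by simp
  obtain c2 f1 f2 r1 r2 where R: "returns_to_path k l c2 (rev p) zr f1 f2 r1 r2"
    "set c2 = set c" "cycle_edges c2 = cycle_edges c"
    using R.returns_to_path_exists[OF zr nd'] .
  consider "pos1 = pos2" "r1 = r2" | "pos1 \<noteq> pos2" | "r1 \<noteq> r2"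
    by blast
  then show False
  proof cases
    case 1
    then show False
      using equal_returns_impossible P R by blast
  next
    case 2
    then have "k = 3"
      using returns_to_path.distinct_returns_imp_k3[OF P(1)] by blast
    then show False
      using distinct_returns_decomposable[OF _ P 2 R] nd by blast
  next
    case 3
    then have "k = 3"
      using returns_to_path.distinct_returns_imp_k3[OF R(1)] by blast
    moreover have "returns_to_path k l c1 (rev (rev p)) z e1 e2 pos1 pos2"
      using P(1) by simp
    ultimately show False
      using R.distinct_returns_decomposable[OF _ R 3] P nd' by blast
  qed
qed

theorem mainTheorem7:
  fixes k l :: nat and c p :: "'a list"
  assumes "k \<ge> 3"
    and "is_cycle c" and "length c = 2 * k"
    and "is_path p" and "path_len p = l" and "l \<in> {2 * k - 1, 2 * k, 2 * k + 1}"
    and "cycle_edges c \<inter> path_edges p = {}"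
    and "set c \<inter> set p \<noteq> {}"
    and "hd p \<notin> set c" and "last p \<notin> set c"
    and "girth_at_least (cycle_edges c \<union> path_edges p) (2 * k - 2)"
  shows "\<exists>q1 q2. is_path q1 \<and> is_path q2
           \<and> path_edges q1 \<union> path_edges q2 = cycle_edges c \<union> path_edges p
           \<and> path_edges q1 \<inter> path_edges q2 = {}
           \<and> path_len q1 \<in> {2 * k, l} \<and> path_len q2 \<in> {2 * k, l}
           \<and> card ({hd q1, last q1} \<inter> {hd p, last p}) = 1
           \<and> card ({hd q2, last q2} \<inter> {hd p, last p}) = 1"
proof -
  interpret cycle_with_path k l c p
    using assms by unfold_locales
  show ?thesis
    using decomposition unfolding two_path_decomposition_def .
qed

end
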